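(* Let $d\ge 1$ and let $R=(r_{i,j})_{1\le i,j\le d}$ be a real $d\times d$ matrix with all entries strictly positive and $r_{i,i}=1$ for all $i$. Define $l:\mathbb{R}^d\to\mathbb{R}$ by $l(\theta)=\sum_{1\le i,j\le d}(\theta_i-r_{i,j}\theta_j)^2$. Then every minimizer $\xi$ of $l$ over the unit sphere $\{\theta\in\mathbb{R}^d:\|\theta\|=1\}$ (Euclidean norm) has all its components nonzero and of the same sign. *)

theory Defs
  imports "HOL-Analysis.Analysis"
begin

definition lfun :: "real^'n^'n \<Rightarrow> real^'n \<Rightarrow> real" where
  "lfun R \<theta> = (\<Sum>i\<in>UNIV. \<Sum>j\<in>UNIV. (\<theta> $ i - R $ i $ j * \<theta> $ j)^2)"

end

theory Submission
  imports Defs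
begin

text \<open>Replacing a point \<open>\<xi>\<close> of the sphere by \<open>\<bar>\<xi>\<bar>\<close> keeps the norm and, since all \<open>r\<^sub>i\<^sub>j > 0\<close>,
does not increase any term \<open>(\<xi>\<^sub>i - r\<^sub>i\<^sub>j \<xi>\<^sub>j)\<^sup>2\<close>, and strictly decreases it when \<open>\<xi>\<^sub>i\<close> and \<open>\<xi>\<^sub>j\<close> have
opposite signs. Hence a minimizer has no sign changes and \<open>\<bar>\<xi>\<bar>\<close> is a nonnegative minimizer.
If such a minimizer \<open>\<eta>\<close> had \<open>\<eta>\<^sub>k = 0\<close>, then \<open>e\<^sub>k\<close> would be tangent to the sphere at \<open>\<eta>\<close>, so the
first-order condition forces the polar form of \<open>l\<close> at \<open>(\<eta>, e\<^sub>k)\<close> to vanish; but that value is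
\<open>-\<Sum>\<^sub>j (r\<^sub>k\<^sub>j + r\<^sub>j\<^sub>k) \<eta>\<^sub>j < 0\<close>.\<close>

definition lfun_polar :: "real^'n^'n \<Rightarrow> real^'n \<Rightarrow> real^'n \<Rightarrow> real" where
  "lfun_polar R x v = (\<Sum>i\<in>UNIV. \<Sum>j\<in>UNIV. (x $ i - R $ i $ j * x $ j) * (v $ i - R $ i $ j * v $ j))"

lemma lfun_add_scaleR:
  "lfun R (x + t *\<^sub>R v) = lfun R x + 2 * t * lfun_polar R x v + t\<^sup>2 * lfun R v"
proof -
  have "(x $ i + t * v $ i - R $ i $ j * (x $ j + t * v $ j))\<^sup>2
     = (x $ i - R $ i $ j * x $ j)\<^sup>2 + 2 * t * ((x $ i - R $ i $ j * x $ j) * (v $ i - R $ i $ j * v $ j))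
       + t\<^sup>2 * (v $ i - R $ i $ j * v $ j)\<^sup>2" for i j
    by (simp add: power2_eq_square algebra_simps)
  then show ?thesis
    by (simp add: lfun_def lfun_polar_def sum.distrib sum_distrib_left)
qed

lemma lfun_scaleR: "lfun R (c *\<^sub>R x) = c\<^sup>2 * lfun R x"
  using lfun_add_scaleR[of R 0 c x] by (simp add: lfun_def lfun_polar_def)

lemma lfun_ge_if_minimizer:
  assumes minim: "\<And>\<theta>. norm \<theta> = 1 \<Longrightarrow> lfun R \<xi> \<le> lfun R \<theta>"
  shows "lfun R \<xi> * (norm \<theta>)\<^sup>2 \<le> lfun R \<theta>"
proof (cases "\<theta> = 0")
  case True
  then show ?thesis using lfun_scaleR[of R 0 \<theta>] by simp
next
  case False
  then have "lfun R \<xi> \<le> lfun R (inverse (norm \<theta>) *\<^sub>R \<theta>)"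
    by (intro minim) simp
  also have "\<dots> = lfun R \<theta> / (norm \<theta>)\<^sup>2"
    by (simp add: lfun_scaleR power_inverse divide_inverse_commute)
  finally show ?thesis
    using False by (simp add: pos_le_divide_eq)
qed

lemma lfun_polar_eq_0_if_minimizer:
  assumes unit: "norm \<xi> = 1"
    and minim: "\<And>\<theta>. norm \<theta> = 1 \<Longrightarrow> lfun R \<xi> \<le> lfun R \<theta>"
    and orth: "orthogonal \<xi> v"
  shows "lfun_polar R \<xi> v = 0"
proof -
  define f where "f t = 2 * t * lfun_polar R \<xi> v + t\<^sup>2 * (lfun R v - lfun R \<xi> * (norm v)\<^sup>2)" for t
  have "f t = lfun R (\<xi> + t *\<^sub>R v) - lfun R \<xi> * (norm (\<xi> + t *\<^sub>R v))\<^sup>2" for t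
    using orth unit
    by (simp add: f_def lfun_add_scaleR norm_add_Pythagorean orthogonal_clauses algebra_simps power_mult_distrib)
  then have min_at_0: "f 0 \<le> f t" for t
    using lfun_ge_if_minimizer[OF minim] by (simp add: f_def)
  have deriv: "DERIV f 0 :> 2 * lfun_polar R \<xi> v"
    unfolding f_def by (auto intro!: derivative_eq_intros)
  have "2 * lfun_polar R \<xi> v = 0"
    by (rule DERIV_local_min[OF deriv zero_less_one]) (simp add: min_at_0)
  then show ?thesis by simp
qed

lemma lfun_polar_axis:
  assumes "x $ k = 0"
  shows "lfun_polar R x (axis k 1) = - (\<Sum>j\<in>UNIV. (R $ k $ j + R $ j $ k) * x $ j)"
proof -
  have "lfun_polar R x (axis k 1)
      = (\<Sum>i\<in>UNIV. \<Sum>j\<in>UNIV. (x $ i - R $ i $ j * x $ j) * axis k 1 $ i)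
        - (\<Sum>i\<in>UNIV. \<Sum>j\<in>UNIV. (x $ i - R $ i $ j * x $ j) * R $ i $ j * axis k 1 $ j)"
    by (simp add: lfun_polar_def right_diff_distrib sum_subtractf mult.assoc)
  also have "(\<Sum>i\<in>UNIV. \<Sum>j\<in>UNIV. (x $ i - R $ i $ j * x $ j) * axis k 1 $ i)
      = (\<Sum>j\<in>UNIV. x $ k - R $ k $ j * x $ j)"
    unfolding sum_distrib_right[symmetric] by (simp add: axis_def if_distrib[of "\<lambda>c. _ * c"] cong: if_cong)
  also have "(\<Sum>i\<in>UNIV. \<Sum>j\<in>UNIV. (x $ i - R $ i $ j * x $ j) * R $ i $ j * axis k 1 $ j)
      = (\<Sum>i\<in>UNIV. (x $ i - R $ i $ k * x $ k) * R $ i $ k)"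
    by (simp add: axis_def if_distrib[of "\<lambda>c. _ * c"] sum.If_cases)
  finally show ?thesis
    using assms by (simp add: sum.distrib sum_negf algebra_simps)
qed

lemma vec_abs_nth [simp]: "\<bar>x\<bar> $ i = \<bar>x $ i\<bar>"
  by (simp add: abs_vec_def)

lemma norm_vec_abs [simp]: "norm \<bar>x :: real^'n\<bar> = norm x"
  by (simp add: norm_vec_def)

lemma power2_abs_diff_le:
  fixes a b r :: real
  assumes "0 \<le> r"
  shows "(\<bar>a\<bar> - r * \<bar>b\<bar>)\<^sup>2 \<le> (a - r * b)\<^sup>2"
proof -
  have "r * (a * b) \<le> r * (\<bar>a\<bar> * \<bar>b\<bar>)"
    using assms by (intro mult_left_mono) (auto simp flip: abs_mult)
  then show ?thesis by (simp add: power2_eq_square algebra_simps)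
qed

lemma power2_abs_diff_less:
  fixes a b r :: real
  assumes "0 < r" and "a * b < 0"
  shows "(\<bar>a\<bar> - r * \<bar>b\<bar>)\<^sup>2 < (a - r * b)\<^sup>2"
proof -
  have "r * (a * b) < r * (\<bar>a\<bar> * \<bar>b\<bar>)"
    using assms by (intro mult_strict_left_mono) (auto simp flip: abs_mult)
  then show ?thesis by (simp add: power2_eq_square algebra_simps)
qed

lemma lfun_abs_le:
  assumes "\<And>i j. 0 \<le> R $ i $ j"
  shows "lfun R \<bar>x\<bar> \<le> lfun R x"
  unfolding lfun_def by (intro sum_mono) (simp add: power2_abs_diff_le assms)

lemma lfun_abs_less:
  assumes pos: "\<And>i j. 0 < R $ i $ j" and opposite: "x $ a * x $ b < 0"
  shows "lfun R \<bar>x\<bar> < lfun R x"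
  unfolding lfun_def sum.cartesian_product
  by (rule sum_strict_mono_ex1)
    (auto simp: power2_abs_diff_le less_imp_le[OF pos]
      intro!: bexI[of _ "(a, b)"] power2_abs_diff_less[OF pos opposite])

lemma minimizer_nth_pos_if_nonneg:
  assumes pos: "\<And>i j. 0 < R $ i $ j" and nonneg: "\<And>i. 0 \<le> \<eta> $ i"
    and unit: "norm \<eta> = 1"
    and minim: "\<And>\<theta>. norm \<theta> = 1 \<Longrightarrow> lfun R \<eta> \<le> lfun R \<theta>"
  shows "0 < \<eta> $ k"
proof (rule ccontr)
  assume "\<not> 0 < \<eta> $ k"
  with nonneg[of k] have zero: "\<eta> $ k = 0" by simp
  obtain m where "\<eta> $ m \<noteq> 0"
    using unit by (metis norm_zero vec_eq_iff zero_index zero_neq_one)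
  with nonneg have "0 < (R $ k $ m + R $ m $ k) * \<eta> $ m"
    by (simp add: add_pos_pos order_neq_le_trans pos)
  also have "\<dots> \<le> (\<Sum>j\<in>UNIV. (R $ k $ j + R $ j $ k) * \<eta> $ j)"
    by (rule member_le_sum) (simp_all add: add_nonneg_nonneg less_imp_le pos nonneg)
  also have "\<dots> = - lfun_polar R \<eta> (axis k 1)"
    by (simp add: lfun_polar_axis[OF zero])
  also have "\<dots> = 0"
    using lfun_polar_eq_0_if_minimizer[OF unit minim, of "axis k 1"] zero
    by (simp add: orthogonal_def inner_axis)
  finally show False by simp
qed

theorem mainTheorem2:
  fixes R :: "real^'n^'n" and \<xi> :: "real^'n"
  assumes pos: "\<And>i j. R $ i $ j > 0"
    and diag: "\<And>i. R $ i $ i = 1"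
    and unit: "norm \<xi> = 1"
    and minim: "\<And>\<theta>. norm \<theta> = 1 \<Longrightarrow> lfun R \<xi> \<le> lfun R \<theta>"
  shows "(\<forall>i. \<xi> $ i > 0) \<or> (\<forall>i. \<xi> $ i < 0)"
proof -
  have abs_minim: "lfun R \<bar>\<xi>\<bar> \<le> lfun R \<theta>" if "norm \<theta> = 1" for \<theta>
    using lfun_abs_le[of R \<xi>] minim[OF that] pos by (meson less_imp_le order_trans)
  have "0 < \<bar>\<xi> $ i\<bar>" for i
    using minimizer_nth_pos_if_nonneg[OF pos _ _ abs_minim] unit by simp
  moreover have "0 \<le> \<xi> $ i * \<xi> $ j" for i j
    using lfun_abs_less[OF pos, of \<xi> i j] minim[of "\<bar>\<xi>\<bar>"] unit by force
  ultimately have "0 < \<xi> $ i * \<xi> $ j" for i j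
    by (simp add: abs_mult order_neq_le_trans)
  then show ?thesis
    by (metis zero_less_mult_iff)
qed

end
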